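(* There exists a universal constant $\alpha>0$ such that for every integer $n\ge1$ \[ \mathbf{T}^\varepsilon_n\ge\alpha\,\varepsilon^2\sum_{i=0}^n\Big(\frac{\partial u_1}{\partial x_2}\Big(2+\frac in,1\Big)\Big)^2+o(\varepsilon^2),\qquad\text{as }\varepsilon\searrow0. \]
   Context: Hersch's pipe is $\mathbf{H}=\{(x_1,x_2):x_1^2+x_2^2<1,\ x_1<0\}\cup\{(x_1,x_2):0<|x_2|<1,\ x_1\ge0\}\subseteq\mathbb{R}^2$; $u_1\in W^{1,2}_0(\mathbf{H})$ is its positive, $L^2$-normalized first Dirichlet eigenfunction (it exists, is $C^2$ up to the flat boundary piece $(0,\infty)\times\{1\}$, and $\partial u_1/\partial x_2$ has a continuous trace there). For $n\ge1$, $0<\varepsilon<1/(2n)$ and $i=0,\dots,n$: $\Sigma^\varepsilon_i=(2+\tfrac in-\varepsilon,2+\tfrac in+\varepsilon)$, $T^\varepsilon_i=\Sigma^\varepsilon_i\times[1,2)$, $\Gamma^\varepsilon_n=\bigcup_{i=0}^n(\Sigma^\varepsilon_i\times\{1\})$, $\mathbf{H}^\varepsilon_n=\mathbf{H}\cup\bigcup_{i=0}^nT^\varepsilon_i$, and \[ \mathbf{T}^\varepsilon_n=\sup_{\varphi\in C^\infty_0(\mathbf{H}^\varepsilon_n)}\Big\{2\int_{\Gamma^\varepsilon_n}\frac{\partial u_1}{\partial x_2}\varphi\,d\mathcal{H}^1-\int_{\mathbf{H}^\varepsilon_n}|\nabla\varphi|^2dx\Big\}. \] *)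

theory Defs
  imports "HOL-Analysis.Analysis"
begin

type_synonym pt = "real \<times> real"

definition hersch :: "pt set" where
  "hersch = {(x1, x2). x1\<^sup>2 + x2\<^sup>2 < 1 \<and> x1 < 0} \<union> {(x1, x2). 0 < \<bar>x2\<bar> \<and> \<bar>x2\<bar> < 1 \<and> x1 \<ge> 0}"

definition dpart :: "bool \<Rightarrow> (pt \<Rightarrow> real) \<Rightarrow> pt \<Rightarrow> real" where
  "dpart k f p = (if k then deriv (\<lambda>t. f (fst p, t)) (snd p) else deriv (\<lambda>t. f (t, snd p)) (fst p))"

definition iter_dpart :: "bool list \<Rightarrow> (pt \<Rightarrow> real) \<Rightarrow> pt \<Rightarrow> real" where
  "iter_dpart ks f = foldr dpart ks f"

definition smooth :: "(pt \<Rightarrow> real) \<Rightarrow> bool" where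
  "smooth f \<longleftrightarrow> (\<forall>ks x. iter_dpart ks f differentiable (at x))"

definition test_fn :: "pt set \<Rightarrow> (pt \<Rightarrow> real) \<Rightarrow> bool" where
  "test_fn U f \<longleftrightarrow> smooth f \<and> compact (closure {x. f x \<noteq> 0}) \<and> closure {x. f x \<noteq> 0} \<subseteq> U"

definition grad_sq :: "(pt \<Rightarrow> real) \<Rightarrow> pt \<Rightarrow> real" where
  "grad_sq f x = (dpart False f x)\<^sup>2 + (dpart True f x)\<^sup>2"

text \<open>W^{1,2}_0(U): u (with gradient (w1,w2) in L^2) is the H^1-limit of test functions.\<close>
definition sob0 :: "pt set \<Rightarrow> (pt \<Rightarrow> real) \<Rightarrow> (pt \<Rightarrow> real) \<Rightarrow> (pt \<Rightarrow> real) \<Rightarrow> bool" where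
  "sob0 U u w1 w2 \<longleftrightarrow>
     set_integrable lebesgue U (\<lambda>x. (u x)\<^sup>2) \<and>
     set_integrable lebesgue U (\<lambda>x. (w1 x)\<^sup>2) \<and>
     set_integrable lebesgue U (\<lambda>x. (w2 x)\<^sup>2) \<and>
     (\<exists>\<phi>. (\<forall>k. test_fn U (\<phi> k)) \<and>
        (\<forall>k. set_integrable lebesgue U (\<lambda>x. (u x - \<phi> k x)\<^sup>2 + (w1 x - dpart False (\<phi> k) x)\<^sup>2
                                            + (w2 x - dpart True (\<phi> k) x)\<^sup>2)) \<and>
        (\<lambda>k. LINT x:U|lebesgue. (u x - \<phi> k x)\<^sup>2 + (w1 x - dpart False (\<phi> k) x)\<^sup>2
                                + (w2 x - dpart True (\<phi> k) x)\<^sup>2) \<longlonglongrightarrow> 0)"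

definition lambda1 :: "pt set \<Rightarrow> real" where
  "lambda1 U = Inf {(LINT x:U|lebesgue. (w1 x)\<^sup>2 + (w2 x)\<^sup>2) / (LINT x:U|lebesgue. (v x)\<^sup>2) | v w1 w2.
                     sob0 U v w1 w2 \<and> (LINT x:U|lebesgue. (v x)\<^sup>2) \<noteq> 0}"

definition first_dirichlet_efun :: "pt set \<Rightarrow> (pt \<Rightarrow> real) \<Rightarrow> (pt \<Rightarrow> real) \<Rightarrow> (pt \<Rightarrow> real) \<Rightarrow> bool" where
  "first_dirichlet_efun U u w1 w2 \<longleftrightarrow>
     sob0 U u w1 w2 \<and> (\<forall>x\<in>U. u x > 0) \<and> (LINT x:U|lebesgue. (u x)\<^sup>2) = 1 \<and>
     (\<forall>\<phi>. test_fn U \<phi> \<longrightarrow>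
        (LINT x:U|lebesgue. w1 x * dpart False \<phi> x + w2 x * dpart True \<phi> x)
          = lambda1 U * (LINT x:U|lebesgue. u x * \<phi> x))"

definition Sig :: "nat \<Rightarrow> real \<Rightarrow> nat \<Rightarrow> real set" where
  "Sig n \<epsilon> i = {2 + real i / real n - \<epsilon> <..< 2 + real i / real n + \<epsilon>}"

definition Tube :: "nat \<Rightarrow> real \<Rightarrow> nat \<Rightarrow> pt set" where
  "Tube n \<epsilon> i = Sig n \<epsilon> i \<times> {1..<2}"

definition Hext :: "nat \<Rightarrow> real \<Rightarrow> pt set" where
  "Hext n \<epsilon> = hersch \<union> (\<Union>i\<in>{0..n}. Tube n \<epsilon> i)"

text \<open>The functional; the integral over Gamma (w.r.t. H^1) is the sum of the integrals over the
  disjoint segments Sig i \<times> {1}; g is the trace of du/dx2 on the line x2 = 1.\<close>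
definition Tfun :: "(real \<Rightarrow> real) \<Rightarrow> nat \<Rightarrow> real \<Rightarrow> ereal" where
  "Tfun g n \<epsilon> = (SUP \<phi>\<in>{\<phi>. test_fn (Hext n \<epsilon>) \<phi>}.
      ereal (2 * (\<Sum>i=0..n. integral (Sig n \<epsilon> i) (\<lambda>t. g t * \<phi> (t, 1)))
             - integral (Hext n \<epsilon>) (grad_sq \<phi>)))"

end

theory Submission
  imports Defs "HOL-Computational_Algebra.Polynomial"
begin

(* A single test function bounds the supremum from below. With g the trace of du/dx2 and
   c_i = 2 + i/n, take

     phi(x) = sum_i beta * eps * g(c_i) * psi((x - (c_i, 1)) / eps)

   where psi is a fixed smooth bump supported in a square of side 1/2, so the bumps straddle
   the openings of the tubes and have disjoint supports. The Dirichlet energy in the plane is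
   invariant under dilations, hence the gradient term is O(beta^2 eps^2 sum_i g(c_i)^2), while
   continuity of g makes the boundary term at least a constant times beta eps^2 sum_i g(c_i)^2.
   A small fixed beta gives the bound with remainder 0. Only continuity of the trace on
   (0, infinity) is used. *)

lemma power2_sum_orthogonal:
  fixes f :: "'a \<Rightarrow> 'b::comm_ring_1"
  assumes "finite A" "\<And>i j. i \<in> A \<Longrightarrow> j \<in> A \<Longrightarrow> i \<noteq> j \<Longrightarrow> f i * f j = 0"
  shows "(\<Sum>i\<in>A. f i)^2 = (\<Sum>i\<in>A. (f i)^2)"
proof -
  have "(\<Sum>j\<in>A. f i * f j) = (f i)^2" if "i \<in> A" for i
  proof -
    have "(\<Sum>j\<in>A - {i}. f i * f j) = 0"
      using assms(2) that by (intro sum.neutral) auto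
    then show ?thesis
      using that by (simp add: sum.remove[OF assms(1)] power2_eq_square)
  qed
  then show ?thesis
    by (simp add: power2_eq_square sum_product)
qed

lemma eventually_sq_le_mult_near:
  fixes g :: "real \<Rightarrow> real"
  assumes "isCont g c"
  shows "\<forall>\<^sub>F e in at_right 0. \<forall>t. \<bar>t - c\<bar> \<le> e \<longrightarrow> (g c)^2 / 2 \<le> g c * g t"
proof (cases "g c = 0")
  case False
  then obtain d where "0 < d" and d: "\<And>t. \<bar>t - c\<bar> < d \<Longrightarrow> \<bar>g t - g c\<bar> < \<bar>g c\<bar> / 2"
    using assms[unfolded continuous_at_eps_delta, rule_format, of "\<bar>g c\<bar> / 2"]
    by (auto simp: dist_real_def)
  have "(g c)^2 / 2 \<le> g c * g t" if "\<bar>t - c\<bar> < d" for t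
  proof -
    have "\<bar>g c * (g t - g c)\<bar> \<le> \<bar>g c\<bar> * (\<bar>g c\<bar> / 2)"
      unfolding abs_mult using d[OF that] by (intro mult_left_mono) auto
    also have "\<dots> = (g c)^2 / 2"
      by (simp add: power2_eq_square abs_mult_self_eq)
    finally have "- (g c * (g t - g c)) \<le> (g c)^2 / 2"
      by (rule abs_le_D2)
    then show ?thesis
      unfolding power2_eq_square right_diff_distrib by linarith
  qed
  then show ?thesis
    using \<open>0 < d\<close> unfolding eventually_at_right_field by (intro exI[of _ d]) auto
qed simp

section \<open>Smooth functions built from exp(-1/t)\<close>

definition flat_exp :: "real poly \<Rightarrow> real \<Rightarrow> real" where
  "flat_exp p t = (if t > 0 then poly p (1/t) * exp (-1/t) else 0)"

(* d/dt (p(1/t) exp(-1/t)) = t^-2 (p - p')(1/t) exp(-1/t) for t > 0 *)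
definition flat_exp_deriv_poly :: "real poly \<Rightarrow> real poly" where
  "flat_exp_deriv_poly p = [:0, 0, 1:] * (p - pderiv p)"

lemma poly_times_exp_neg_at_top: "((\<lambda>x::real. poly q x * exp (-x)) \<longlongrightarrow> 0) at_top"
proof -
  have "(\<lambda>x. poly q x * exp (-x)) = (\<lambda>x. \<Sum>i\<le>degree q. coeff q i * (x ^ i / exp x))"
    by (auto simp: poly_altdef sum_divide_distrib exp_minus divide_inverse[symmetric])
  moreover have "((\<lambda>x::real. coeff q i * (x ^ i / exp x)) \<longlongrightarrow> 0) at_top" for i
    using tendsto_mult_right_zero[OF tendsto_power_div_exp_0] by simp
  ultimately show ?thesis
    by (simp add: tendsto_null_sum)
qed

lemma flat_exp_at_right_0: "(flat_exp p \<longlongrightarrow> 0) (at_right 0)"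
proof -
  have "((\<lambda>y. poly p (inverse y) * exp (- inverse y)) \<longlongrightarrow> 0) (at_right 0)"
    using filterlim_compose[OF poly_times_exp_neg_at_top filterlim_inverse_at_top_right]
    by (simp add: o_def)
  then show ?thesis
    by (rule Lim_transform_eventually)
      (auto simp: flat_exp_def divide_inverse eventually_at_right_field intro: exI[of _ 1])
qed

lemma flat_exp_nonpos: "t \<le> 0 \<Longrightarrow> flat_exp p t = 0"
  by (simp add: flat_exp_def)

lemma flat_exp_smult: "flat_exp (smult c p) t = c * flat_exp p t"
  by (simp add: flat_exp_def)

lemma has_real_derivative_flat_exp_pos:
  assumes "t > 0"
  shows "(flat_exp p has_real_derivative flat_exp (flat_exp_deriv_poly p) t) (at t)"
proof -
  have "((\<lambda>y. poly p (1/y) * exp (-1/y)) has_real_derivative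
         poly (pderiv p) (1/t) * (-1/t^2) * exp (-1/t) + poly p (1/t) * (exp (-1/t) * (1/t^2))) (at t)"
    using assms by (auto intro!: derivative_eq_intros simp: power2_eq_square)
  moreover have "\<forall>\<^sub>F y in nhds t. poly p (1/y) * exp (-1/y) = flat_exp p y"
    using eventually_nhds_in_open[of "{0<..}" t] assms
    by (auto simp: flat_exp_def elim!: eventually_mono)
  moreover have "poly (pderiv p) (1/t) * (-1/t^2) * exp (-1/t) + poly p (1/t) * (exp (-1/t) * (1/t^2))
      = flat_exp (flat_exp_deriv_poly p) t"
    using assms by (simp add: flat_exp_def flat_exp_deriv_poly_def power2_eq_square algebra_simps)
  ultimately show ?thesis
    using DERIV_cong_ev[OF refl] by fastforce
qed

lemma has_real_derivative_flat_exp: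
  "(flat_exp p has_real_derivative flat_exp (flat_exp_deriv_poly p) t) (at t)"
proof (cases t "0::real" rule: linorder_cases)
  case less
  have "\<forall>\<^sub>F y in nhds t. 0 = flat_exp p y"
    using less eventually_nhds_in_open[of "{..<0}" t]
    by (auto simp: flat_exp_nonpos elim!: eventually_mono)
  from DERIV_cong_ev[OF refl this refl] have "(flat_exp p has_real_derivative 0) (at t)"
    using DERIV_const by blast
  then show ?thesis
    using less by (simp add: flat_exp_nonpos)
next
  case equal
  have "((\<lambda>y. (flat_exp p y - flat_exp p 0) / y) \<longlongrightarrow> 0) (at 0)"
  proof (rule filterlim_split_at)
    show "((\<lambda>y. (flat_exp p y - flat_exp p 0) / y) \<longlongrightarrow> 0) (at_left 0)"
      by (rule tendsto_eventually)
        (auto simp: flat_exp_def eventually_at_left_field intro: exI[of _ "-1"])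
    show "((\<lambda>y. (flat_exp p y - flat_exp p 0) / y) \<longlongrightarrow> 0) (at_right 0)"
      using flat_exp_at_right_0[of "pCons 0 p"]
      by (rule Lim_transform_eventually)
        (auto simp: flat_exp_def eventually_at_right_field intro!: exI[of _ 1])
  qed
  then show ?thesis
    using equal by (simp add: has_field_derivative_iff flat_exp_def)
next
  case greater
  then show ?thesis by (rule has_real_derivative_flat_exp_pos)
qed

lemma has_real_derivative_flat_exp_affine:
  "((\<lambda>t. flat_exp p (c * t + d)) has_real_derivative
     flat_exp (smult c (flat_exp_deriv_poly p)) (c * a + d)) (at a)"
proof -
  have "((\<lambda>t. c * t + d) has_real_derivative c) (at a)"
    by (auto intro!: derivative_eq_intros)
  from DERIV_chain2[OF has_real_derivative_flat_exp this] show ?thesis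
    by (simp add: flat_exp_smult mult.commute)
qed

lemma differentiable_flat_exp_comp:
  "l differentiable (at z) \<Longrightarrow> (\<lambda>x. flat_exp p (l x)) differentiable (at z)"
  using differentiable_chain_at[of l z "flat_exp p"] has_real_derivative_flat_exp
  by (auto simp: o_def real_differentiable_def)

lemma continuous_flat_exp: "isCont (flat_exp p) t"
  using has_real_derivative_flat_exp DERIV_isCont by blast

inductive_set flat_exp_alg :: "(pt \<Rightarrow> real) set" where
  const: "(\<lambda>_. c) \<in> flat_exp_alg"
| fst_affine: "(\<lambda>x. flat_exp p (c * fst x + d)) \<in> flat_exp_alg"
| snd_affine: "(\<lambda>x. flat_exp p (c * snd x + d)) \<in> flat_exp_alg"
| add: "f \<in> flat_exp_alg \<Longrightarrow> g \<in> flat_exp_alg \<Longrightarrow> (\<lambda>x. f x + g x) \<in> flat_exp_alg"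
| mult: "f \<in> flat_exp_alg \<Longrightarrow> g \<in> flat_exp_alg \<Longrightarrow> (\<lambda>x. f x * g x) \<in> flat_exp_alg"

lemma flat_exp_alg_sum:
  "finite A \<Longrightarrow> (\<And>i. i \<in> A \<Longrightarrow> f i \<in> flat_exp_alg) \<Longrightarrow> (\<lambda>x. \<Sum>i\<in>A. f i x) \<in> flat_exp_alg"
  by (induction A rule: finite_induct) (auto intro: flat_exp_alg.intros)

lemma flat_exp_alg_swap: "f \<in> flat_exp_alg \<Longrightarrow> (\<lambda>x. f (prod.swap x)) \<in> flat_exp_alg"
  by (induction rule: flat_exp_alg.induct) (auto intro: flat_exp_alg.intros)

lemma flat_exp_alg_differentiable: "f \<in> flat_exp_alg \<Longrightarrow> f differentiable (at z)"
proof (induction rule: flat_exp_alg.induct)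
  case (fst_affine p c d)
  have "((\<lambda>x. c * fst x + d) has_derivative (\<lambda>h. c * fst h)) (at z)"
    by (auto intro!: derivative_eq_intros)
  then show ?case
    by (intro differentiable_flat_exp_comp differentiableI)
next
  case (snd_affine p c d)
  have "((\<lambda>x. c * snd x + d) has_derivative (\<lambda>h. c * snd h)) (at z)"
    by (auto intro!: derivative_eq_intros)
  then show ?case
    by (intro differentiable_flat_exp_comp differentiableI)
qed (auto intro: differentiable_add differentiable_mult)

(* The second coordinate is reduced to the first by flat_exp_alg_swap and dpart_True_swap. *)
lemma flat_exp_alg_has_partial_fst:
  "f \<in> flat_exp_alg \<Longrightarrow> \<exists>f'\<in>flat_exp_alg. \<forall>a b. ((\<lambda>t. f (t, b)) has_real_derivative f' (a, b)) (at a)"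
proof (induction rule: flat_exp_alg.induct)
  case (fst_affine p c d)
  show ?case
    using has_real_derivative_flat_exp_affine
    by (auto intro!: bexI[of _ "\<lambda>x. flat_exp (smult c (flat_exp_deriv_poly p)) (c * fst x + d)"]
        flat_exp_alg.fst_affine)
next
  case (add f g)
  then show ?case
    by (fastforce intro!: bexI[of _ "\<lambda>x. _ x + _ x"] DERIV_add flat_exp_alg.add)
next
  case (mult f g)
  then obtain f' g' where "f' \<in> flat_exp_alg" "g' \<in> flat_exp_alg"
    "\<forall>a b. ((\<lambda>t. f (t, b)) has_real_derivative f' (a, b)) (at a)"
    "\<forall>a b. ((\<lambda>t. g (t, b)) has_real_derivative g' (a, b)) (at a)"
    by blast
  with mult.hyps show ?case
    by (intro bexI[of _ "\<lambda>x. f x * g' x + f' x * g x"] allI DERIV_mult')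
      (auto intro: flat_exp_alg.add flat_exp_alg.mult)
qed (auto intro!: bexI[of _ "\<lambda>_. 0"] flat_exp_alg.const)

lemma dpart_True_swap: "dpart True f p = dpart False (\<lambda>x. f (prod.swap x)) (prod.swap p)"
  by (simp add: dpart_def)

lemma dpart_flat_exp_alg: "f \<in> flat_exp_alg \<Longrightarrow> dpart k f \<in> flat_exp_alg"
proof -
  have dpart_False: "dpart False g \<in> flat_exp_alg" if g: "g \<in> flat_exp_alg" for g
  proof -
    obtain g' where "g' \<in> flat_exp_alg" "\<forall>a b. ((\<lambda>t. g (t, b)) has_real_derivative g' (a, b)) (at a)"
      using flat_exp_alg_has_partial_fst[OF g] by blast
    moreover from this have "dpart False g = g'"
      by (auto simp: dpart_def fun_eq_iff intro!: DERIV_imp_deriv)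
    ultimately show ?thesis by simp
  qed
  assume f: "f \<in> flat_exp_alg"
  show ?thesis
  proof (cases k)
    case True
    have "dpart True f = (\<lambda>p. dpart False (\<lambda>x. f (prod.swap x)) (prod.swap p))"
      by (simp add: dpart_True_swap fun_eq_iff)
    then show ?thesis
      using True flat_exp_alg_swap[OF dpart_False[OF flat_exp_alg_swap[OF f]]] by simp
  qed (use dpart_False f in simp)
qed

lemma smooth_flat_exp_alg: "f \<in> flat_exp_alg \<Longrightarrow> smooth f"
proof -
  assume "f \<in> flat_exp_alg"
  then have "iter_dpart ks f \<in> flat_exp_alg" for ks
    by (induction ks) (simp_all add: iter_dpart_def dpart_flat_exp_alg)
  then show ?thesis
    by (simp add: smooth_def flat_exp_alg_differentiable)
qed

section \<open>Bump functions\<close>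

definition bump :: "real \<Rightarrow> real" where
  "bump t = flat_exp 1 (1/4 + t) * flat_exp 1 (1/4 - t)"

definition bump_deriv :: "real \<Rightarrow> real" where
  "bump_deriv t = flat_exp (flat_exp_deriv_poly 1) (1/4 + t) * flat_exp 1 (1/4 - t)
                  - flat_exp 1 (1/4 + t) * flat_exp (flat_exp_deriv_poly 1) (1/4 - t)"

lemma has_real_derivative_bump: "(bump has_real_derivative bump_deriv t) (at t)"
  using DERIV_mult'[OF has_real_derivative_flat_exp_affine[of 1 1 "1/4" t]
                       has_real_derivative_flat_exp_affine[of 1 "-1" "1/4" t]]
  unfolding bump_def[abs_def] bump_deriv_def flat_exp_smult by (simp add: algebra_simps)

lemma has_real_derivative_bump_affine:
  "((\<lambda>t. bump ((t - c) / e)) has_real_derivative bump_deriv ((a - c) / e) / e) (at a)"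
proof -
  have "((\<lambda>t. (t - c) / e) has_real_derivative 1 / e) (at a)"
    by (cases "e = 0") (auto intro!: derivative_eq_intros)
  from DERIV_chain2[OF has_real_derivative_bump this] show ?thesis
    by simp
qed

lemma bump_eq_0: "1/4 \<le> \<bar>t\<bar> \<Longrightarrow> bump t = 0"
  and bump_deriv_eq_0: "1/4 \<le> \<bar>t\<bar> \<Longrightarrow> bump_deriv t = 0"
  by (auto simp: bump_def bump_deriv_def flat_exp_nonpos abs_if split: if_splits)

lemma bump_nonneg: "0 \<le> bump t"
  by (simp add: bump_def flat_exp_def)

lemma bump_0: "bump 0 = exp (-8)"
  by (simp add: bump_def flat_exp_def mult_exp_exp)

lemma bump_ge:
  assumes "\<bar>t\<bar> \<le> 1/8"
  shows "exp (-16) \<le> bump t"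
proof -
  have flat_exp_ge: "exp (-8) \<le> flat_exp 1 s" if "1/8 \<le> s" for s
    using that by (simp add: flat_exp_def divide_le_eq)
  have "exp (-8) * exp (-8) \<le> flat_exp 1 (1/4 + t) * flat_exp 1 (1/4 - t)"
    using assms by (intro mult_mono flat_exp_ge) (auto simp: flat_exp_def)
  then show ?thesis
    by (simp add: bump_def mult_exp_exp)
qed

lemma continuous_on_bump: "continuous_on S bump"
  using has_real_derivative_bump by (meson DERIV_isCont continuous_at_imp_continuous_on)

lemma continuous_on_bump_deriv: "continuous_on S bump_deriv"
  unfolding bump_deriv_def[abs_def]
  by (intro continuous_intros
      continuous_on_compose2[OF continuous_at_imp_continuous_on[OF ballI[OF continuous_flat_exp]]])
    auto

lemma bump_bounded: "\<exists>M>0. \<forall>t. \<bar>bump t\<bar> \<le> M \<and> \<bar>bump_deriv t\<bar> \<le> M"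
proof -
  have "compact ((\<lambda>t. \<bar>bump t\<bar> + \<bar>bump_deriv t\<bar>) ` {-1/4..1/4})"
    by (intro compact_continuous_image continuous_intros continuous_on_bump continuous_on_bump_deriv)
      auto
  then obtain B where B: "\<forall>t\<in>{-1/4..1/4}. \<bar>bump t\<bar> + \<bar>bump_deriv t\<bar> \<le> B"
    by (force dest!: compact_imp_bounded simp: bounded_iff)
  have "\<bar>bump t\<bar> \<le> max B 1 \<and> \<bar>bump_deriv t\<bar> \<le> max B 1" for t
  proof (cases "1/4 \<le> \<bar>t\<bar>")
    case False
    then have "t \<in> {-1/4..1/4}"
      by auto
    then have "\<bar>bump t\<bar> + \<bar>bump_deriv t\<bar> \<le> B"
      using B by blast
    then show ?thesis by linarith
  qed (simp add: bump_eq_0 bump_deriv_eq_0)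
  then show ?thesis
    by (intro exI[of _ "max B 1"]) auto
qed

definition plane_bump :: "pt \<Rightarrow> real \<Rightarrow> pt \<Rightarrow> real" where
  "plane_bump q e x = bump ((fst x - fst q) / e) * bump ((snd x - snd q) / e)"

lemma bump_fst_in_flat_exp_alg: "(\<lambda>x. bump ((fst x - c) / e)) \<in> flat_exp_alg"
proof -
  have eq: "(\<lambda>x. bump ((fst x - c) / e))
      = (\<lambda>x. flat_exp 1 ((1/e) * fst x + (1/4 - c/e)) * flat_exp 1 ((-1/e) * fst x + (1/4 + c/e)))"
    by (auto simp: bump_def fun_eq_iff diff_divide_distrib algebra_simps)
  show ?thesis
    unfolding eq by (intro flat_exp_alg.mult flat_exp_alg.fst_affine)
qed

lemma plane_bump_in_flat_exp_alg: "plane_bump q e \<in> flat_exp_alg"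
proof -
  have eq: "plane_bump q e
      = (\<lambda>x. bump ((fst x - fst q) / e) * (\<lambda>y. bump ((fst y - snd q) / e)) (prod.swap x))"
    by (simp add: plane_bump_def fun_eq_iff)
  show ?thesis
    unfolding eq by (intro flat_exp_alg.mult flat_exp_alg_swap bump_fst_in_flat_exp_alg)
qed

lemma has_real_derivative_plane_bump_fst:
  "((\<lambda>t. plane_bump q e (t, b)) has_real_derivative
     bump_deriv ((a - fst q) / e) / e * bump ((b - snd q) / e)) (at a)"
  unfolding plane_bump_def fst_conv snd_conv
  by (intro DERIV_cmult_right has_real_derivative_bump_affine)

lemma has_real_derivative_plane_bump_snd:
  "((\<lambda>t. plane_bump q e (a, t)) has_real_derivative
     bump ((a - fst q) / e) * (bump_deriv ((b - snd q) / e) / e)) (at b)"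
  unfolding plane_bump_def fst_conv snd_conv
  by (intro DERIV_cmult has_real_derivative_bump_affine)

lemma dpart_plane_bump:
  "dpart False (plane_bump q e) x = bump_deriv ((fst x - fst q) / e) / e * bump ((snd x - snd q) / e)"
  "dpart True (plane_bump q e) x = bump ((fst x - fst q) / e) * (bump_deriv ((snd x - snd q) / e) / e)"
  using has_real_derivative_plane_bump_fst has_real_derivative_plane_bump_snd
  by (simp_all add: dpart_def DERIV_imp_deriv)

definition square_box :: "pt \<Rightarrow> real \<Rightarrow> pt set" where
  "square_box q r = cbox (fst q - r, snd q - r) (fst q + r, snd q + r)"

lemma mem_square_box: "x \<in> square_box q r \<longleftrightarrow> \<bar>fst x - fst q\<bar> \<le> r \<and> \<bar>snd x - snd q\<bar> \<le> r"
  by (cases x) (auto simp: square_box_def cbox_Pair_iff abs_le_iff)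

lemma plane_bump_eq_0:
  assumes "0 < e" "x \<notin> square_box q (e/4)"
  shows "plane_bump q e x = 0" and "dpart k (plane_bump q e) x = 0"
proof -
  have "1/4 \<le> \<bar>(fst x - fst q) / e\<bar> \<or> 1/4 \<le> \<bar>(snd x - snd q) / e\<bar>"
    using assms by (auto simp: mem_square_box abs_divide le_divide_eq)
  then show "plane_bump q e x = 0" "dpart k (plane_bump q e) x = 0"
    by (cases k; auto simp: plane_bump_def dpart_plane_bump bump_eq_0 bump_deriv_eq_0)+
qed

lemma grad_sq_plane_bump_le:
  assumes M: "\<forall>t. \<bar>bump t\<bar> \<le> M \<and> \<bar>bump_deriv t\<bar> \<le> M" and "0 < e"
  shows "grad_sq (plane_bump q e) x \<le> 2 * M^4 / e^2"
proof -
  have prod_le: "(u * v / e)^2 \<le> M^4 / e^2" if "\<bar>u\<bar> \<le> M" "\<bar>v\<bar> \<le> M" for u v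
  proof -
    have "\<bar>u * v\<bar> \<le> M * M"
      unfolding abs_mult using that by (intro mult_mono) auto
    then have "\<bar>u * v\<bar>^2 \<le> (M * M)^2"
      by (intro power_mono) auto
    then show ?thesis
      by (simp add: power_divide divide_right_mono power_mult_distrib flip: power2_eq_square power_add)
  qed
  have "(dpart k (plane_bump q e) x)^2 \<le> M^4 / e^2" for k
    using M by (cases k) (simp_all add: dpart_plane_bump prod_le)
  from this[of False] this[of True] show ?thesis
    unfolding grad_sq_def by simp
qed

lemma continuous_on_grad_sq_plane_bump:
  assumes "0 < e"
  shows "continuous_on S (grad_sq (plane_bump q e))"
proof -
  have affine: "continuous_on S (\<lambda>x. f ((fst x - fst q) / e))"
      "continuous_on S (\<lambda>x. f ((snd x - snd q) / e))"
    if "\<And>S. continuous_on S f" for f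
    using assms by (auto intro!: continuous_on_compose2[OF that[of UNIV]] continuous_intros)
  show ?thesis
    unfolding grad_sq_def[abs_def] dpart_plane_bump
    using assms
    by (intro continuous_on_add continuous_on_power continuous_on_mult continuous_on_divide
        continuous_on_const affine continuous_on_bump continuous_on_bump_deriv) auto
qed

section \<open>The test function\<close>

definition tube_centre :: "nat \<Rightarrow> nat \<Rightarrow> real" where
  "tube_centre n i = 2 + real i / real n"

lemma tube_centre_ge_2: "2 \<le> tube_centre n i"
  by (simp add: tube_centre_def)

lemma Sig_tube_centre: "Sig n e i = {tube_centre n i - e <..< tube_centre n i + e}"
  by (simp add: Sig_def tube_centre_def)

lemma less_1_if_less_inverse_double: "1 \<le> n \<Longrightarrow> e < 1 / (2 * real n) \<Longrightarrow> e < 1"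
proof -
  assume "1 \<le> n" "e < 1 / (2 * real n)"
  moreover from \<open>1 \<le> n\<close> have "1 / (2 * real n) \<le> 1"
    by (simp add: divide_le_eq)
  ultimately show "e < 1"
    by linarith
qed

lemma tube_centre_separated:
  assumes "1 \<le> n" "i \<noteq> j"
  shows "1 / real n \<le> \<bar>tube_centre n i - tube_centre n j\<bar>"
proof -
  have "1 / real n \<le> \<bar>real i - real j\<bar> / real n"
    using assms by (intro divide_right_mono) auto
  then show ?thesis
    by (simp add: tube_centre_def abs_divide flip: diff_divide_distrib)
qed

lemma square_boxes_disjoint:
  assumes "1 \<le> n" "e < 1 / (2 * real n)" "i \<noteq> j" "x \<in> square_box (tube_centre n i, 1) (e/4)"
  shows "x \<notin> square_box (tube_centre n j, 1) (e/4)"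
proof
  assume "x \<in> square_box (tube_centre n j, 1) (e/4)"
  with assms(4) have "\<bar>fst x - tube_centre n i\<bar> \<le> e/4" "\<bar>fst x - tube_centre n j\<bar> \<le> e/4"
    by (auto simp: mem_square_box)
  then have "\<bar>tube_centre n i - tube_centre n j\<bar> \<le> e/2"
    by arith
  moreover have "e/2 < 1 / real n"
    using assms(1,2) by (simp add: field_simps)
  ultimately show False
    using tube_centre_separated[OF assms(1,3)] by linarith
qed

lemma square_box_subset_Hext:
  assumes "0 < e" "e < 1" "i \<le> n"
  shows "square_box (tube_centre n i, 1) (e/4) \<subseteq> Hext n e"
proof
  fix x assume "x \<in> square_box (tube_centre n i, 1) (e/4)"
  moreover obtain a b where x: "x = (a, b)"
    by fastforce
  ultimately have "\<bar>a - tube_centre n i\<bar> \<le> e/4" "\<bar>b - 1\<bar> \<le> e/4"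
    by (auto simp: mem_square_box)
  then have "x \<in> hersch \<or> x \<in> Tube n e i"
    using x assms tube_centre_ge_2[of n i]
    by (cases "b < 1") (auto simp: hersch_def Tube_def Sig_tube_centre abs_le_iff)
  then show "x \<in> Hext n e"
    using assms by (auto simp: Hext_def)
qed

definition bump_test :: "(real \<Rightarrow> real) \<Rightarrow> nat \<Rightarrow> real \<Rightarrow> real \<Rightarrow> pt \<Rightarrow> real" where
  "bump_test g n e b x = (\<Sum>i=0..n. b * e * g (tube_centre n i) * plane_bump (tube_centre n i, 1) e x)"

lemma test_fn_bump_test:
  assumes "1 \<le> n" "0 < e" "e < 1 / (2 * real n)"
  shows "test_fn (Hext n e) (bump_test g n e b)"
proof -
  define U where "U = (\<Union>i\<in>{0..n}. square_box (tube_centre n i, 1) (e/4))"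
  have "compact U"
    by (auto simp: U_def square_box_def intro!: compact_UN)
  moreover have "{x. bump_test g n e b x \<noteq> 0} \<subseteq> U"
    using plane_bump_eq_0(1)[OF assms(2)] by (force simp: bump_test_def U_def intro: sum.neutral)
  ultimately have "compact (closure {x. bump_test g n e b x \<noteq> 0})"
    and "closure {x. bump_test g n e b x \<noteq> 0} \<subseteq> U"
    by (auto intro: bounded_subset compact_imp_bounded)
      (meson closure_minimal compact_imp_closed subsetD)
  moreover have "e < 1"
    using assms(1,3) by (rule less_1_if_less_inverse_double)
  then have "U \<subseteq> Hext n e"
    unfolding U_def using assms(2) by (intro UN_least square_box_subset_Hext) auto
  moreover have "bump_test g n e b \<in> flat_exp_alg"
    unfolding bump_test_def[abs_def]
    by (intro flat_exp_alg_sum flat_exp_alg.mult flat_exp_alg.const plane_bump_in_flat_exp_alg) auto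
  ultimately show ?thesis
    by (auto simp: test_fn_def smooth_flat_exp_alg)
qed

section \<open>Energy estimates\<close>

lemma dpart_bump_test:
  "dpart k (bump_test g n e b) x
     = (\<Sum>i=0..n. b * e * g (tube_centre n i) * dpart k (plane_bump (tube_centre n i, 1) e) x)"
proof (cases k)
  case False
  have "((\<lambda>t. bump_test g n e b (t, snd x)) has_real_derivative
      (\<Sum>i=0..n. b * e * g (tube_centre n i) * dpart False (plane_bump (tube_centre n i, 1) e) x)) (at (fst x))"
    unfolding bump_test_def dpart_plane_bump
    by (intro DERIV_sum DERIV_cmult has_real_derivative_plane_bump_fst)
  then show ?thesis
    using False by (simp add: dpart_def DERIV_imp_deriv)
next
  case True
  have "((\<lambda>t. bump_test g n e b (fst x, t)) has_real_derivative
      (\<Sum>i=0..n. b * e * g (tube_centre n i) * dpart True (plane_bump (tube_centre n i, 1) e) x)) (at (snd x))"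
    unfolding bump_test_def dpart_plane_bump
    by (intro DERIV_sum DERIV_cmult has_real_derivative_plane_bump_snd)
  then show ?thesis
    using True by (simp add: dpart_def DERIV_imp_deriv)
qed

lemma grad_sq_bump_test:
  assumes "1 \<le> n" "0 < e" "e < 1 / (2 * real n)"
  shows "grad_sq (bump_test g n e b) x
    = (\<Sum>i=0..n. (b * e * g (tube_centre n i))^2 * grad_sq (plane_bump (tube_centre n i, 1) e) x)"
proof -
  have "(dpart k (bump_test g n e b) x)^2
      = (\<Sum>i=0..n. (b * e * g (tube_centre n i) * dpart k (plane_bump (tube_centre n i, 1) e) x)^2)" for k
    unfolding dpart_bump_test
  proof (rule power2_sum_orthogonal)
    fix i j :: nat assume "i \<noteq> j"
    then have "x \<notin> square_box (tube_centre n i, 1) (e/4) \<or> x \<notin> square_box (tube_centre n j, 1) (e/4)"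
      using square_boxes_disjoint[OF assms(1,3)] by blast
    then have "dpart k (plane_bump (tube_centre n i, 1) e) x = 0 \<or> dpart k (plane_bump (tube_centre n j, 1) e) x = 0"
      using plane_bump_eq_0(2)[OF assms(2)] by blast
    then show "b * e * g (tube_centre n i) * dpart k (plane_bump (tube_centre n i, 1) e) x *
        (b * e * g (tube_centre n j) * dpart k (plane_bump (tube_centre n j, 1) e) x) = 0"
      by auto
  qed simp
  then show ?thesis
    by (simp add: grad_sq_def power_mult_distrib sum.distrib distrib_left)
qed

lemma measure_square_box: "0 \<le> r \<Longrightarrow> measure lborel (square_box q r) = (2 * r)^2"
  by (simp add: square_box_def content_Pair power2_eq_square)

lemma integral_grad_sq_bump_test_le:
  assumes n: "1 \<le> n" "0 < e" "e < 1 / (2 * real n)"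
    and M: "\<forall>t. \<bar>bump t\<bar> \<le> M \<and> \<bar>bump_deriv t\<bar> \<le> M"
  shows "integral (Hext n e) (grad_sq (bump_test g n e b))
    \<le> (\<Sum>i=0..n. (b * e * g (tube_centre n i))^2 * M^4 / 2)"
proof -
  define a where "a i = (b * e * g (tube_centre n i))^2" for i
  define Q where "Q i = square_box (tube_centre n i, 1) (e/4)" for i
  define S where "S i x = a i * grad_sq (plane_bump (tube_centre n i, 1) e) x" for i x
  have integrable: "S i integrable_on Q i" for i
    unfolding S_def[abs_def] Q_def square_box_def using n(2)
    by (intro integrable_continuous continuous_intros continuous_on_grad_sq_plane_bump)
  have "e < 1"
    using n(1,3) by (rule less_1_if_less_inverse_double)
  then have "Q i \<subseteq> Hext n e" if "i \<le> n" for i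
    unfolding Q_def using n(2) that by (intro square_box_subset_Hext)
  moreover have "S i x = 0" if "x \<notin> Q i" for i x
    using that by (simp add: S_def Q_def grad_sq_def plane_bump_eq_0(2)[OF n(2)])
  ultimately have "(S i has_integral integral (Q i) (S i)) (Hext n e)" if "i \<le> n" for i
    using that by (intro has_integral_on_superset[OF integrable_integral[OF integrable]]) auto
  then have "((\<lambda>x. \<Sum>i=0..n. S i x) has_integral (\<Sum>i=0..n. integral (Q i) (S i))) (Hext n e)"
    by (intro has_integral_sum) auto
  moreover have "(\<lambda>x. \<Sum>i=0..n. S i x) = grad_sq (bump_test g n e b)"
    by (simp add: fun_eq_iff grad_sq_bump_test[OF n] S_def a_def)
  moreover have "integral (Q i) (S i) \<le> a i * M^4 / 2" for i
  proof -
    have "S i x \<le> a i * (2 * M^4 / e^2)" for x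
      unfolding S_def a_def by (intro mult_left_mono grad_sq_plane_bump_le[OF M n(2)]) simp
    then have "integral (Q i) (S i) \<le> integral (Q i) (\<lambda>_. a i * (2 * M^4 / e^2))"
      by (intro integral_le integrable) (simp_all add: Q_def square_box_def integrable_const)
    also have "\<dots> = (2 * (e/4))^2 * (a i * (2 * M^4 / e^2))"
      using measure_square_box[of "e/4" "(tube_centre n i, 1)"] n(2)
      unfolding Q_def square_box_def by simp
    also have "\<dots> = a i * M^4 / 2"
      using n(2) by (simp add: field_simps power2_eq_square)
    finally show ?thesis .
  qed
  ultimately show ?thesis
    by (simp add: integral_unique sum_mono a_def)
qed

lemma bump_test_on_Sig:
  assumes "1 \<le> n" "0 < e" "e < 1 / (2 * real n)" "i \<le> n" "t \<in> Sig n e i"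
  shows "bump_test g n e b (t, 1) = b * e * g (tube_centre n i) * exp (-8) * bump ((t - tube_centre n i) / e)"
proof -
  have t: "\<bar>t - tube_centre n i\<bar> < e"
    using assms(5) by (auto simp: Sig_tube_centre abs_less_iff)
  have "plane_bump (tube_centre n j, 1) e (t, 1) = 0" if "j \<noteq> i" for j
  proof (rule plane_bump_eq_0(1)[OF assms(2)])
    have "e + e/4 < 1 / real n"
      using assms(1,3) by (simp add: field_simps)
    then have "e/4 < \<bar>t - tube_centre n j\<bar>"
      using t tube_centre_separated[OF assms(1) that[symmetric]] by linarith
    then show "(t, 1) \<notin> square_box (tube_centre n j, 1) (e/4)"
      by (simp add: mem_square_box)
  qed
  then have "bump_test g n e b (t, 1) = b * e * g (tube_centre n i) * plane_bump (tube_centre n i, 1) e (t, 1)"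
    unfolding bump_test_def using assms(4) by (subst sum.remove[of _ i]) (auto intro: sum.neutral)
  then show ?thesis
    by (simp add: plane_bump_def bump_0 mult_ac)
qed

lemma integral_Sig_bump_test_ge:
  assumes n: "1 \<le> n" "0 < e" "e < 1 / (2 * real n)" "i \<le> n" and "0 \<le> b"
    and g: "continuous_on {0<..} g"
    and near: "\<forall>t. \<bar>t - tube_centre n i\<bar> \<le> e \<longrightarrow> (g (tube_centre n i))^2 / 2 \<le> g (tube_centre n i) * g t"
  shows "b * exp (-24) * e^2 * (g (tube_centre n i))^2 / 8
    \<le> integral (Sig n e i) (\<lambda>t. g t * bump_test g n e b (t, 1))"
proof -
  define c where "c = tube_centre n i"
  define f where "f t = b * e * exp (-8) * (g c * g t) * bump ((t - c) / e)" for t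
  define K where "K = b * e * exp (-8) * ((g c)^2 / 2) * exp (-16)"
  have Sig: "Sig n e i = {c - e <..< c + e}"
    by (simp add: Sig_tube_centre c_def)
  have "2 \<le> c"
    by (simp add: c_def tube_centre_ge_2)
  moreover have "e < 1"
    using n(1,3) by (rule less_1_if_less_inverse_double)
  ultimately have "continuous_on {c - e..c + e} g"
    by (intro continuous_on_subset[OF g]) auto
  then have "continuous_on {c - e..c + e} f"
    unfolding f_def using n(2)
    by (intro continuous_intros continuous_on_compose2[OF continuous_on_bump[of UNIV]]) auto
  then have integrable: "f integrable_on {c - e..c + e}"
    by (rule integrable_continuous_interval)
  have near_c: "(g c)^2 / 2 \<le> g c * g t" and near_c_nonneg: "0 \<le> g c * g t" if "\<bar>t - c\<bar> \<le> e" for t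
  proof -
    show "(g c)^2 / 2 \<le> g c * g t"
      using near that by (simp add: c_def)
    moreover have "0 \<le> (g c)^2 / 2"
      by simp
    ultimately show "0 \<le> g c * g t"
      by linarith
  qed
  have f_nonneg: "0 \<le> f t" if "\<bar>t - c\<bar> \<le> e" for t
    using that n(2) \<open>0 \<le> b\<close> near_c_nonneg by (simp add: f_def bump_nonneg)
  have K_le_f: "K \<le> f t" if "t \<in> {c - e/8..c + e/8}" for t
  proof -
    have "\<bar>t - c\<bar> \<le> e/8"
      using that by (simp only: atLeastAtMost_iff) arith
    then have "\<bar>(t - c) / e\<bar> \<le> 1/8" and near_t: "\<bar>t - c\<bar> \<le> e"
      using n(2) by (simp_all add: abs_divide divide_le_eq)
    then have "(g c)^2 / 2 * exp (-16) \<le> (g c * g t) * bump ((t - c) / e)"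
      using near_c[OF near_t] near_c_nonneg[OF near_t] by (intro mult_mono bump_ge) auto
    then have "b * e * exp (-8) * ((g c)^2 / 2 * exp (-16))
        \<le> b * e * exp (-8) * ((g c * g t) * bump ((t - c) / e))"
      using n(2) \<open>0 \<le> b\<close> by (intro mult_left_mono) auto
    then show ?thesis
      by (simp only: K_def f_def mult.assoc)
  qed
  have "b * exp (-24) * e^2 * (g c)^2 / 8 = e/4 * K"
    by (simp add: K_def mult_exp_exp power2_eq_square)
  also have "\<dots> = integral {c - e/8..c + e/8} (\<lambda>_. K)"
    using n(2) by simp
  also have "\<dots> \<le> integral {c - e/8..c + e/8} f"
    using K_le_f n(2) by (intro integral_le integrable_on_subinterval[OF integrable]) auto
  also have "\<dots> \<le> integral {c - e..c + e} f"
    using f_nonneg n(2) by (intro integral_subset_le integrable_on_subinterval[OF integrable]) auto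
  also have "\<dots> = integral (Sig n e i) f"
    by (simp add: Sig integral_open_interval_real)
  also have "\<dots> = integral (Sig n e i) (\<lambda>t. g t * bump_test g n e b (t, 1))"
    by (intro integral_cong) (simp add: bump_test_on_Sig[OF n] f_def c_def mult_ac)
  finally show ?thesis
    by (simp add: c_def)
qed

lemma Tfun_ge_bump_test_energy:
  assumes n: "1 \<le> n" "0 < e" "e < 1 / (2 * real n)"
    and M: "\<forall>t. \<bar>bump t\<bar> \<le> M \<and> \<bar>bump_deriv t\<bar> \<le> M" and "0 \<le> b"
    and g: "continuous_on {0<..} g"
    and near: "\<forall>i\<in>{0..n}. \<forall>t. \<bar>t - tube_centre n i\<bar> \<le> e \<longrightarrow>
                 (g (tube_centre n i))^2 / 2 \<le> g (tube_centre n i) * g t"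
  shows "ereal ((b * exp (-24) / 4 - b^2 * M^4 / 2) * e^2 * (\<Sum>i=0..n. (g (tube_centre n i))^2))
    \<le> Tfun g n e"
proof -
  let ?\<phi> = "bump_test g n e b"
  have "(\<Sum>i=0..n. b * exp (-24) * e^2 * (g (tube_centre n i))^2 / 8)
      \<le> (\<Sum>i=0..n. integral (Sig n e i) (\<lambda>t. g t * ?\<phi> (t, 1)))"
    using near by (intro sum_mono integral_Sig_bump_test_ge[OF n _ \<open>0 \<le> b\<close> g]) auto
  moreover have "integral (Hext n e) (grad_sq ?\<phi>) \<le> (\<Sum>i=0..n. (b * e * g (tube_centre n i))^2 * M^4 / 2)"
    using n M by (rule integral_grad_sq_bump_test_le)
  moreover have "(b * exp (-24) / 4 - b^2 * M^4 / 2) * e^2 * (\<Sum>i=0..n. (g (tube_centre n i))^2)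
      = 2 * (\<Sum>i=0..n. b * exp (-24) * e^2 * (g (tube_centre n i))^2 / 8)
        - (\<Sum>i=0..n. (b * e * g (tube_centre n i))^2 * M^4 / 2)"
    by (simp add: sum_distrib_left sum_subtractf sum_divide_distrib power_mult_distrib algebra_simps)
  ultimately have "(b * exp (-24) / 4 - b^2 * M^4 / 2) * e^2 * (\<Sum>i=0..n. (g (tube_centre n i))^2)
      \<le> 2 * (\<Sum>i=0..n. integral (Sig n e i) (\<lambda>t. g t * ?\<phi> (t, 1))) - integral (Hext n e) (grad_sq ?\<phi>)"
    by linarith
  moreover have "ereal (2 * (\<Sum>i=0..n. integral (Sig n e i) (\<lambda>t. g t * ?\<phi> (t, 1)))
      - integral (Hext n e) (grad_sq ?\<phi>)) \<le> Tfun g n e"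
    unfolding Tfun_def by (rule SUP_upper) (simp add: test_fn_bump_test[OF n])
  ultimately show ?thesis
    using ereal_less_eq(3) order_trans by blast
qed

lemma eventually_Tfun_ge:
  assumes n: "1 \<le> n" and g: "continuous_on {0<..} g"
    and M: "\<forall>t. \<bar>bump t\<bar> \<le> M \<and> \<bar>bump_deriv t\<bar> \<le> M" and "0 \<le> b"
  shows "\<forall>\<^sub>F e in at_right 0.
    ereal ((b * exp (-24) / 4 - b^2 * M^4 / 2) * e^2 * (\<Sum>i=0..n. (g (tube_centre n i))^2)) \<le> Tfun g n e"
proof -
  have "isCont g (tube_centre n i)" for i
    using g tube_centre_ge_2[of n i] by (simp add: continuous_on_eq_continuous_at)
  then have "\<forall>\<^sub>F e in at_right 0. \<forall>i\<in>{0..n}. \<forall>t. \<bar>t - tube_centre n i\<bar> \<le> e \<longrightarrow>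
      (g (tube_centre n i))^2 / 2 \<le> g (tube_centre n i) * g t"
    by (intro eventually_ball_finite ballI eventually_sq_le_mult_near) auto
  moreover have "\<forall>\<^sub>F e in at_right 0. 0 < e \<and> e < 1 / (2 * real n)"
    using n by (intro eventually_at_rightI[of 0 "1 / (2 * real n)"]) auto
  ultimately show ?thesis
    by eventually_elim (use Tfun_ge_bump_test_energy[OF n _ _ M \<open>0 \<le> b\<close> g] in blast)
qed

theorem mainTheorem10:
  fixes u w1 w2 d2u :: "real \<times> real \<Rightarrow> real" and du :: "real \<Rightarrow> real"
  assumes efun: "first_dirichlet_efun hersch u w1 w2"
    and pd: "\<forall>p\<in>hersch. ((\<lambda>y. u (fst p, y)) has_real_derivative d2u p) (at (snd p))"
    and tr: "\<forall>t>0. ((\<lambda>s. d2u (t, s)) \<longlongrightarrow> du t) (at_left 1)"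
    and trcont: "continuous_on {0<..} du"
  shows "\<exists>\<alpha>>0. \<forall>n\<ge>1. \<exists>r :: real \<Rightarrow> real.
           ((\<lambda>\<epsilon>. r \<epsilon> / \<epsilon>\<^sup>2) \<longlongrightarrow> 0) (at_right 0) \<and>
           (\<forall>\<^sub>F \<epsilon> in at_right 0.
              ereal (\<alpha> * \<epsilon>\<^sup>2 * (\<Sum>i=0..n. (du (2 + real i / real n))\<^sup>2) + r \<epsilon>) \<le> Tfun du n \<epsilon>)"
proof -
  obtain M where "0 < M" and M: "\<forall>t. \<bar>bump t\<bar> \<le> M \<and> \<bar>bump_deriv t\<bar> \<le> M"
    using bump_bounded by blast
  \<comment> \<open>\<beta> maximises the coefficient \<alpha> in eventually_Tfun_ge\<close>
  define \<beta> where "\<beta> = exp (-24) / (4 * M^4)"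
  define \<alpha> where "\<alpha> = \<beta> * exp (-24) / 4 - \<beta>^2 * M^4 / 2"
  have "\<alpha> = (exp (-24))^2 / (32 * M^4)"
    using \<open>0 < M\<close> by (simp add: \<alpha>_def \<beta>_def power2_eq_square field_simps)
  then have "0 < \<alpha>"
    using \<open>0 < M\<close> by simp
  moreover have "\<forall>\<^sub>F e in at_right 0. ereal (\<alpha> * e^2 * (\<Sum>i=0..n. (du (tube_centre n i))^2)) \<le> Tfun du n e"
    if "1 \<le> n" for n
    using eventually_Tfun_ge[OF that trcont M, of \<beta>] \<open>0 < M\<close> by (simp add: \<alpha>_def \<beta>_def)
  ultimately show ?thesis
    by (intro exI[of _ \<alpha>] conjI allI impI exI[of _ "\<lambda>_. 0"]) (auto simp: tube_centre_def)
qed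

end
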